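(* Let $n\ge 1$. If the Zeckendorf game on $n$, starting from $\{F_1^n\}$, can be played to the Zeckendorf decomposition of $n$ using only splitting moves and $C_1$ moves, then $n=F_k-1$ for some $k\ge 2$.
   Context: Fibonacci numbers are indexed by $F_1=1$, $F_2=2$, $F_{i+1}=F_i+F_{i-1}$. A game state is a finite multiset of Fibonacci numbers (tracked by index); $\{F_1^n\}$ denotes $n$ copies of $F_1$. The legal moves are: $C_1$: replace $F_1,F_1$ by $F_2$; for $i\ge 2$, $C_i$: replace $F_{i-1},F_i$ by $F_{i+1}$ (a "combining move"); $S_2$: replace $F_2,F_2$ by $F_1,F_3$; for $i\ge 3$, $S_i$: replace $F_i,F_i$ by $F_{i-2},F_{i+1}$ (a "splitting move"). The game on $n$ starts at $\{F_1^n\}$ and ends when no legal move is available, which happens exactly at the Zeckendorf decomposition of $n$ (the unique representation of $n$ as a sum of $F_i$'s with distinct, pairwise non-consecutive indices). *)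

theory Defs
  imports Main "HOL-Library.Multiset"
begin

text \<open>Fibonacci numbers indexed F 1 = 1, F 2 = 2, F (i+1) = F i + F (i-1).
  Index 0 is never used in game states (its value here is a dummy).\<close>
fun F :: "nat \<Rightarrow> nat" where
  "F 0 = 0"
| "F (Suc 0) = 1"
| "F (Suc (Suc 0)) = 2"
| "F (Suc (Suc (Suc i))) = F (Suc (Suc i)) + F (Suc i)"

text \<open>Game states: finite multisets of Fibonacci indices (each index \<ge> 1).\<close>
type_synonym state = "nat multiset"

inductive combine_move :: "nat \<Rightarrow> state \<Rightarrow> state \<Rightarrow> bool" where
  C1: "{#1, 1#} \<subseteq># M \<Longrightarrow> combine_move 1 M (M - {#1, 1#} + {#2#})"
| Ci: "i \<ge> 2 \<Longrightarrow> {#i - 1, i#} \<subseteq># M \<Longrightarrow> combine_move i M (M - {#i - 1, i#} + {#i + 1#})"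

inductive split_move :: "nat \<Rightarrow> state \<Rightarrow> state \<Rightarrow> bool" where
  S2: "{#2, 2#} \<subseteq># M \<Longrightarrow> split_move 2 M (M - {#2, 2#} + {#1, 3#})"
| Si: "i \<ge> 3 \<Longrightarrow> {#i, i#} \<subseteq># M \<Longrightarrow> split_move i M (M - {#i, i#} + {#i - 2, i + 1#})"

definition legal_move :: "state \<Rightarrow> state \<Rightarrow> bool" where
  "legal_move M M' \<longleftrightarrow> (\<exists>i. combine_move i M M' \<or> split_move i M M')"

definition split_or_C1_move :: "state \<Rightarrow> state \<Rightarrow> bool" where
  "split_or_C1_move M M' \<longleftrightarrow> combine_move 1 M M' \<or> (\<exists>i. split_move i M M')"

definition is_zeckendorf :: "nat \<Rightarrow> state \<Rightarrow> bool" where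
  "is_zeckendorf n Z \<longleftrightarrow>
     (\<forall>i \<in># Z. i \<ge> 1) \<and> (\<forall>i. count Z i \<le> 1) \<and>
     (\<forall>i. \<not> (i \<in># Z \<and> Suc i \<in># Z)) \<and>
     (\<Sum>i \<in># Z. F i) = n"

definition start_state :: "nat \<Rightarrow> state" where
  "start_state n = replicate_mset n 1"

end

theory Submission
  imports Defs
begin

text \<open>Along any play using only splitting moves and C_1, every index m not exceeding the
  largest index present satisfies F (m - 1) \<le> 1 + (the value of the parts with index below m).
  A split S_i keeps the value below m unchanged once m exceeds i + 1, because
  F (i - 2) + F (i + 1) = 2 F i, and the newly reachable index i + 1 is covered by the
  bound at i together with F i = F (i - 1) + F (i - 2); C_1 and S_2 only create indices
  at most 3, where the bound is automatic.  At the end, with M the largest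
  index of the Zeckendorf decomposition, this gives n + 1 \<ge> F M + F (M - 1) = F (M + 1),
  while every Zeckendorf decomposition with top index M sums to less than F (M + 1).\<close>

lemma F_1_2_3 [simp]: "F 1 = 1" "F 2 = 2" "F 3 = 3"
  by (simp_all add: numeral_eq_Suc)

lemma F_Suc_Suc: "i \<ge> 1 \<Longrightarrow> F (Suc (Suc i)) = F (Suc i) + F i"
  by (cases i) auto

lemma F_le_Suc: "F n \<le> F (Suc n)"
  by (induction n rule: F.induct) auto

lemma F_le_1: "m \<le> 2 \<Longrightarrow> F (m - 1) \<le> 1"
  by (cases m; cases "m - 1") auto

lemma is_zeckendorf_remove:
  assumes "is_zeckendorf n Z" and "K \<in># Z"
  shows "is_zeckendorf (n - F K) (Z - {#K#})"
proof -
  have "\<forall>i. count (Z - {#K#}) i \<le> count Z i" by simp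
  moreover have "(\<Sum>i\<in>#Z - {#K#}. F i) = (\<Sum>i\<in>#Z. F i) - F K"
    using assms(2) by (metis add_diff_cancel_left' insert_DiffM sum_mset.insert)
  ultimately show ?thesis
    using assms(1) unfolding is_zeckendorf_def by (meson in_diffD le_trans)
qed

lemma zeckendorf_sum_less:
  assumes "is_zeckendorf n Z" and "\<forall>i\<in>#Z. i \<le> K"
  shows "n < F (Suc K)"
  using assms
proof (induction K arbitrary: n Z rule: less_induct)
  case (less K)
  have pos: "\<forall>i\<in>#Z. i \<ge> 1" and single: "\<forall>i. count Z i \<le> 1"
    and sparse: "\<forall>i. \<not> (i \<in># Z \<and> Suc i \<in># Z)" and sum: "(\<Sum>i\<in>#Z. F i) = n"
    using less.prems(1) unfolding is_zeckendorf_def by auto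
  show ?case
  proof (cases "K \<in># Z")
    case False
    show ?thesis
    proof (cases "K = 0")
      case True
      then have "Z = {#}"
        using pos less.prems(2) by (metis le_zero_eq multiset_nonemptyE not_one_le_zero)
      then show ?thesis using sum True by simp
    next
      case False
      have "\<forall>i\<in>#Z. i \<le> K - 1"
      proof
        fix i assume "i \<in># Z"
        then have "i \<le> K" "i \<noteq> K" using less.prems(2) \<open>K \<notin># Z\<close> by auto
        then show "i \<le> K - 1" by linarith
      qed
      then have "n < F (Suc (K - 1))" using False by (intro less.IH[OF _ less.prems(1)]) auto
      then show ?thesis using False F_le_Suc[of K] by simp
    qed
  next
    case True
    let ?Z' = "Z - {#K#}"
    have K1: "K \<ge> 1" using pos True by blast
    have "K \<notin># ?Z'"
      using single[rule_format, of K] True by (simp add: not_in_iff)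
    moreover have "K - 1 \<notin># ?Z'"
      using sparse[rule_format, of "K - 1"] True K1 by (auto dest: in_diffD)
    ultimately have "\<forall>i\<in>#?Z'. i \<le> K - 2"
    proof (intro ballI)
      fix i assume "K \<notin># ?Z'" "K - 1 \<notin># ?Z'" "i \<in># ?Z'"
      then have "i \<le> K" "i \<noteq> K" "i \<noteq> K - 1" using less.prems(2) by (auto dest: in_diffD)
      then show "i \<le> K - 2" by linarith
    qed
    then have "n - F K < F (Suc (K - 2))"
      using less.IH[of "K - 2"] is_zeckendorf_remove[OF less.prems(1) True] K1 by simp
    moreover have "F (Suc K) = F K + F (Suc (K - 2))"
      using K1 F_Suc_Suc[of "K - 1"] by (cases "K = 1") (auto simp: numeral_eq_Suc Suc_diff_Suc)
    ultimately show ?thesis by linarith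
  qed
qed

definition sum_below :: "nat \<Rightarrow> state \<Rightarrow> nat" where
  "sum_below m s = (\<Sum>i\<in>#filter_mset (\<lambda>i. i < m) s. F i)"

lemma sum_below_empty [simp]: "sum_below m {#} = 0"
  by (simp add: sum_below_def)

lemma sum_below_add_mset [simp]:
  "sum_below m (add_mset x s) = (if x < m then F x else 0) + sum_below m s"
  by (simp add: sum_below_def)

lemma sum_below_union [simp]: "sum_below m (r + s) = sum_below m r + sum_below m s"
  by (simp add: sum_below_def)

lemma sum_below_mono: "m \<le> m' \<Longrightarrow> sum_below m s \<le> sum_below m' s"
  by (induction s) auto

lemma sum_below_Suc: "sum_below (Suc m) s = sum_below m s + count s m * F m"
  by (induction s) auto

lemma sum_below_eq_sum: "\<forall>i\<in>#s. i < m \<Longrightarrow> sum_below m s = (\<Sum>i\<in>#s. F i)"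
  by (induction s) auto

definition sums_below_large :: "state \<Rightarrow> bool" where
  "sums_below_large s \<longleftrightarrow> (\<forall>m. (\<exists>i\<in>#s. m \<le> i) \<longrightarrow> F (m - 1) \<le> sum_below m s + 1)"

lemma sums_below_large_start: "sums_below_large (start_state n)"
  unfolding sums_below_large_def start_state_def by auto

lemma sums_below_large_C1:
  assumes "sums_below_large (r + {#1, 1#})"
  shows "sums_below_large (r + {#2#})"
  unfolding sums_below_large_def
proof (intro allI impI)
  fix m assume top: "\<exists>i\<in># r + {#2#}. m \<le> i"
  show "F (m - 1) \<le> sum_below m (r + {#2#}) + 1"
  proof (cases "m \<le> 2")
    case True then show ?thesis using F_le_1 by fastforce
  next
    case False
    then have "\<exists>i\<in># r + {#1, 1#}. m \<le> i" using top by auto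
    then show ?thesis using assms False unfolding sums_below_large_def by fastforce
  qed
qed

lemma sums_below_large_S2:
  assumes "sums_below_large (r + {#2, 2#})"
  shows "sums_below_large (r + {#1, 3#})"
  unfolding sums_below_large_def
proof (intro allI impI)
  fix m assume top: "\<exists>i\<in># r + {#1, 3#}. m \<le> i"
  show "F (m - 1) \<le> sum_below m (r + {#1, 3#}) + 1"
  proof (cases "m \<le> 3")
    case True
    then have "m \<le> 2 \<or> m = 3" by auto
    then show ?thesis using F_le_1 by fastforce
  next
    case False
    then have "\<exists>i\<in># r + {#2, 2#}. m \<le> i" using top by auto
    then show ?thesis using assms False unfolding sums_below_large_def by fastforce
  qed
qed

lemma sums_below_large_Si:
  assumes inv: "sums_below_large (r + {#i, i#})" and "i \<ge> 3"
  shows "sums_below_large (r + {#i - 2, i + 1#})"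
  unfolding sums_below_large_def
proof (intro allI impI)
  fix m assume top: "\<exists>j\<in># r + {#i - 2, i + 1#}. m \<le> j"
  have F_i: "F i = F (i - 1) + F (i - 2)" and F_Suc_i: "F (i + 1) = F i + F (i - 1)"
    using F_Suc_Suc[of "i - 2"] F_Suc_Suc[of "i - 1"] \<open>i \<ge> 3\<close>
    by (simp_all add: numeral_eq_Suc Suc_diff_Suc)
  have old: "F (k - 1) \<le> sum_below k (r + {#i, i#}) + 1" if "k \<le> i" for k
    using inv that unfolding sums_below_large_def by auto
  consider "m \<le> i" | "m = i + 1" | "i + 1 < m" by linarith
  then show "F (m - 1) \<le> sum_below m (r + {#i - 2, i + 1#}) + 1"
  proof cases
    case 1
    then show ?thesis using old[of m] by auto
  next
    case 2
    have "F (i - 1) \<le> sum_below (i + 1) r + 1"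
      using old[of i] sum_below_mono[of i "i + 1" r] by simp
    then show ?thesis using 2 F_i \<open>i \<ge> 3\<close> by simp
  next
    case 3
    then have "\<exists>j\<in># r + {#i, i#}. m \<le> j" using top by auto
    then have "F (m - 1) \<le> sum_below m (r + {#i, i#}) + 1"
      using inv unfolding sums_below_large_def by blast
    moreover have "i - 2 < m" using 3 by linarith
    ultimately show ?thesis using 3 F_i F_Suc_i by simp
  qed
qed

lemma sums_below_large_step:
  assumes "split_or_C1_move s s'" and "sums_below_large s"
  shows "sums_below_large s'"
  using assms(1) unfolding split_or_C1_move_def
proof (elim disjE exE)
  assume "combine_move 1 s s'"
  then show ?thesis
  proof cases
    case C1
    then show ?thesis
      using sums_below_large_C1[of "s - {#1, 1#}"] assms(2) by (metis subset_mset.diff_add)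
  qed auto
next
  fix i assume "split_move i s s'"
  then show ?thesis
  proof cases
    case S2
    then show ?thesis
      using sums_below_large_S2[of "s - {#2, 2#}"] assms(2) by (metis subset_mset.diff_add)
  next
    case Si
    then show ?thesis
      using sums_below_large_Si[of "s - {#i, i#}" i] assms(2) by (metis subset_mset.diff_add)
  qed
qed

theorem lemma3p2:
  fixes n :: nat and Z :: state
  assumes "n \<ge> 1"
    and "is_zeckendorf n Z"
    and "split_or_C1_move\<^sup>*\<^sup>* (start_state n) Z"
  shows "\<exists>k \<ge> 2. n = F k - 1"
proof -
  have inv: "sums_below_large Z" using assms(3)
    by (induction rule: rtranclp_induct) (auto intro: sums_below_large_step sums_below_large_start)
  have sum: "(\<Sum>i\<in>#Z. F i) = n" and single: "count Z M \<le> 1" for M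
    using assms(2) unfolding is_zeckendorf_def by auto
  have "Z \<noteq> {#}" using sum assms(1) by auto
  define M where "M = Max (set_mset Z)"
  have M_in: "M \<in># Z" and M_max: "\<forall>i\<in>#Z. i \<le> M"
    unfolding M_def using \<open>Z \<noteq> {#}\<close> by simp_all
  have upper: "n < F (Suc M)" using zeckendorf_sum_less[OF assms(2) M_max] .
  have "n = sum_below (Suc M) Z" using sum M_max by (simp add: sum_below_eq_sum less_Suc_eq_le)
  also have "\<dots> = sum_below M Z + F M"
    using sum_below_Suc[of M Z] single[of M] M_in by (simp add: count_eq_zero_iff le_Suc_eq)
  finally have n_eq: "n = sum_below M Z + F M" .
  have "F (Suc M) \<le> n + 1"
  proof (cases "M = 1")
    case True then show ?thesis using assms(1) by simp
  next
    case False
    then have "M \<ge> 2" using assms(2) M_in unfolding is_zeckendorf_def by fastforce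
    moreover have "F (M - 1) \<le> sum_below M Z + 1"
      using inv M_in unfolding sums_below_large_def by blast
    ultimately show ?thesis using n_eq F_Suc_Suc[of "M - 1"] by (simp add: Suc_diff_Suc)
  qed
  with upper have "n = F (Suc M) - 1" by linarith
  moreover have "Suc M \<ge> 2" using assms(2) M_in unfolding is_zeckendorf_def by fastforce
  ultimately show ?thesis by blast
qed

end
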